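(* Let $\mathcal{X}\subseteq\mathbb{R}^n$, let $\mathcal{W}=[0,L_0]\times\cdots\times[0,L_{v-1}]\subset\mathbb{R}^v$ with $L_i>0$, let $g:\mathcal{X}\to\mathcal{W}$ be a fixed (Borel measurable) map, and let $\mu$ be a Borel probability measure on $\mathcal{W}$. Then the spectral ergodic cost function $\mathcal{E}_\mu$ (defined below) is a $\mu$-ergodic cost function; that is, for every continuous trajectory $x:\mathbb{R}^+\to\mathcal{X}$, if $\mathcal{E}_\mu(x|_{[0,T]})\to 0$ as $T\to\infty$, then the time-averaged measures $\mathcal{Q}_T$ of $x$ converge weakly to $\mu$ as $T\to\infty$, i.e. $\lim_{T\to\infty}\int_{\mathcal{W}}\phi\,d\mathcal{Q}_T=\int_{\mathcal{W}}\phi\,d\mu$ for every continuous $\phi:\mathcal{W}\to\mathbb{R}$.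
   Context: For a continuous trajectory $x:[0,T]\to\mathcal{X}$ (or the restriction $x|_{[0,T]}$ of $x:\mathbb{R}^+\to\mathcal{X}$), the time-averaged trajectory statistics measure is the probability measure on $\mathcal{W}$ given by $\mathcal{Q}_T(A)=\frac{1}{T}\,m\big((g\circ x)^{-1}(A)\cap[0,T]\big)$ for Borel $A\subset\mathcal{W}$, where $m$ is Lebesgue measure on $\mathbb{R}^+$; equivalently $\int_{\mathcal{W}}\phi\,d\mathcal{Q}_T=\frac1T\int_0^T\phi(g(x(t)))\,dt$. Let $\mathcal{K}^v=\mathbb{N}^v$ be the set of all integer frequency multi-indices $k=(k_0,\dots,k_{v-1})$, and for each $k$ let $F_k(w)=\frac{1}{h_k}\prod_{i=0}^{v-1}\cos\!\left(\frac{w_i k_i\pi}{L_i}\right)$, where $h_k>0$ is a normalizing constant. Let $\Lambda_k=(1+\|k\|_2)^{-\frac{v+1}{2}}$. The spectral ergodic cost of $x:[0,T]\to\mathcal{X}$ is $\mathcal{E}_\mu(x)=\sum_{k\in\mathcal{K}^v}\Lambda_k\left(\frac1T\int_0^T F_k(g(x(t)))\,dt-\int_{\mathcal{W}}F_k(w)\,d\mu(w)\right)^2.$ A $\mu$-ergodic cost function is a function $\mathcal{E}$ on finite-time trajectories such that for every trajectory $x:\mathbb{R}^+\to\mathcal{X}$, $\mathcal{E}(x|_{[0,T]})\to0$ as $T\to\infty$ implies $x$ is ergodic with respect to $\mu$, meaning $\mathcal{Q}_T$ converges weakly to $\mu$. *)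

theory Defs
  imports "HOL-Probability.Probability"
begin

definition workspace :: "real^'v \<Rightarrow> (real^'v) set" where
  "workspace L = {w. \<forall>i. 0 \<le> w$i \<and> w$i \<le> L$i}"

definition fourier_basis :: "(('v::finite \<Rightarrow> nat) \<Rightarrow> real) \<Rightarrow> real^'v \<Rightarrow> ('v \<Rightarrow> nat) \<Rightarrow> real^'v \<Rightarrow> real" where
  "fourier_basis h L k w = (1 / h k) * (\<Prod>i\<in>UNIV. cos (w$i * real (k i) * pi / L$i))"

definition spectral_weight :: "('v::finite \<Rightarrow> nat) \<Rightarrow> real" where
  "spectral_weight k = (1 + sqrt (\<Sum>i\<in>UNIV. (real (k i))\<^sup>2)) powr (- (real CARD('v) + 1) / 2)"

text \<open>Time average (1/T) int_0^T phi(g(x t)) dt, i.e. the integral of phi against Q_T.\<close>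
definition time_average :: "('x \<Rightarrow> 'w) \<Rightarrow> (real \<Rightarrow> 'x) \<Rightarrow> real \<Rightarrow> ('w \<Rightarrow> real) \<Rightarrow> real" where
  "time_average g x T \<phi> = (1 / T) * (LINT t:{0..T}|lborel. \<phi> (g (x t)))"

text \<open>Spectral ergodic cost of x restricted to [0,T]; valued in ennreal so that a divergent
  series counts as +infinity.\<close>
definition spectral_ergodic_cost ::
  "(('v::finite \<Rightarrow> nat) \<Rightarrow> real) \<Rightarrow> real^'v \<Rightarrow> (real^'v) measure \<Rightarrow> ('x \<Rightarrow> real^'v)
     \<Rightarrow> (real \<Rightarrow> 'x) \<Rightarrow> real \<Rightarrow> ennreal" where
  "spectral_ergodic_cost h L \<mu> g x T =
     (\<Sum>\<^sub>\<infinity>k\<in>UNIV. ennreal (spectral_weight k *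
        (time_average g x T (fourier_basis h L k) - (\<integral>w. fourier_basis h L k w \<partial>\<mu>))\<^sup>2))"

definition ergodic_wrt :: "('x \<Rightarrow> 'w::topological_space) \<Rightarrow> 'w measure \<Rightarrow> (real \<Rightarrow> 'x) \<Rightarrow> bool" where
  "ergodic_wrt g \<mu> x \<longleftrightarrow>
     (\<forall>\<phi>. continuous_on (space \<mu>) \<phi> \<longrightarrow>
        ((\<lambda>T. time_average g x T \<phi>) \<longlongrightarrow> (\<integral>w. \<phi> w \<partial>\<mu>)) at_top)"

definition ergodic_cost_function ::
  "('x::topological_space) set \<Rightarrow> ('x \<Rightarrow> 'w::topological_space) \<Rightarrow> 'w measure
     \<Rightarrow> ((real \<Rightarrow> 'x) \<Rightarrow> real \<Rightarrow> ennreal) \<Rightarrow> bool" where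
  "ergodic_cost_function X g \<mu> E \<longleftrightarrow>
     (\<forall>x. continuous_on {0..} x \<longrightarrow> x ` {0..} \<subseteq> X \<longrightarrow>
        ((\<lambda>T. E x T) \<longlongrightarrow> 0) at_top \<longrightarrow> ergodic_wrt g \<mu> x)"

end

theory Submission
  imports Defs
begin

text \<open>The cosine modes \<open>\<Prod>\<^sub>i cos (w\<^sub>i k\<^sub>i \<pi> / L\<^sub>i)\<close> span an algebra of continuous functions on
  the box \<open>W\<close>: it contains the constants (\<open>k = 0\<close>), is closed under products (product-to-sum
  formula in every coordinate), and separates points (\<open>cos\<close> is injective on \<open>[0, \<pi>]\<close>). By
  Stone-Weierstrass it is uniformly dense in \<open>C(W)\<close>. Every summand of the spectral cost is a
  positive weight \<open>\<Lambda>\<^sub>k\<close> times the squared error of one Fourier coefficient, so a vanishing cost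
  makes the time average of every mode, hence of every element of the algebra, converge to its
  \<open>\<mu>\<close>-integral. Since both sides are averages, a uniform \<open>\<epsilon>\<close>-approximation moves them by at most
  \<open>\<epsilon>\<close>, and convergence extends to all continuous test functions.\<close>

lemma compact_workspace: "compact (workspace L)"
proof -
  have "workspace L = cbox 0 L"
    by (auto simp: workspace_def mem_box_cart)
  then show ?thesis by simp
qed

lemma measurable_trajectory:
  fixes x :: "real \<Rightarrow> 'a::topological_space" and g :: "'a \<Rightarrow> 'b::topological_space"
  assumes x_cont: "continuous_on {0..} x" and x_in: "x ` {0..} \<subseteq> X"
    and g_maps: "g ` X \<subseteq> W" and g_meas: "g \<in> borel_measurable (restrict_space borel X)"
  shows "(\<lambda>t. g (x t)) \<in> measurable (restrict_space lborel {0..T}) (restrict_space borel W)"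
proof -
  have "continuous_on {0..T} x"
    using x_cont by (rule continuous_on_subset) auto
  then have "x \<in> measurable (restrict_space lborel {0..T}) borel"
    using borel_measurable_continuous_on_restrict
    by (simp add: measurable_def space_restrict_space sets_restrict_space)
  then have "x \<in> measurable (restrict_space lborel {0..T}) (restrict_space borel X)"
    using x_in by (intro measurable_restrict_space2) (auto simp: space_restrict_space)
  moreover have "g \<in> measurable (restrict_space borel X) (restrict_space borel W)"
    using g_maps g_meas by (intro measurable_restrict_space2) (auto simp: space_restrict_space)
  ultimately show ?thesis
    using measurable_comp by (auto simp: comp_def)
qed

lemma continuous_on_compact_bound:
  fixes \<phi> :: "'a::topological_space \<Rightarrow> real"
  assumes "compact W" and "continuous_on W \<phi>"
  obtains B where "\<And>w. w \<in> W \<Longrightarrow> \<bar>\<phi> w\<bar> \<le> B"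
  using compact_imp_bounded[OF compact_continuous_image[OF assms(2,1)]]
  by (auto simp: bounded_iff)

lemma set_integrable_trajectory:
  fixes y :: "real \<Rightarrow> 'a::topological_space" and \<phi> :: "'a \<Rightarrow> real"
  assumes y_meas: "y \<in> measurable (restrict_space lborel {0..T}) (restrict_space borel W)"
    and "compact W" and \<phi>_cont: "continuous_on W \<phi>"
  shows "set_integrable lborel {0..T} (\<lambda>t. \<phi> (y t))"
proof -
  obtain B where B: "\<And>w. w \<in> W \<Longrightarrow> \<bar>\<phi> w\<bar> \<le> B"
    using continuous_on_compact_bound assms(2,3) by blast
  interpret finite_measure "restrict_space lborel {0..T}"
    by (intro finite_measureI) (simp add: emeasure_restrict_space space_restrict_space emeasure_lborel_Icc_eq)
  have "\<phi> \<in> borel_measurable (restrict_space borel W)"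
    using \<phi>_cont by (rule borel_measurable_continuous_on_restrict)
  then have "(\<lambda>t. \<phi> (y t)) \<in> borel_measurable (restrict_space lborel {0..T})"
    using measurable_comp[OF y_meas] by (simp add: comp_def)
  moreover have "y t \<in> W" if "t \<in> {0..T}" for t
    using measurable_space[OF y_meas] that by (simp add: space_restrict_space)
  ultimately have "integrable (restrict_space lborel {0..T}) (\<lambda>t. \<phi> (y t))"
    using B by (intro integrable_const_bound[where B = B] AE_I2) (auto simp: space_restrict_space)
  then show ?thesis
    by (subst set_integrable_eq) auto
qed

lemma integrable_continuous_on_compact:
  fixes \<phi> :: "'a::topological_space \<Rightarrow> real"
  assumes "finite_measure M" and M_sets: "sets M = sets (restrict_space borel W)"
    and "compact W" and \<phi>_cont: "continuous_on W \<phi>"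
  shows "integrable M \<phi>"
proof -
  interpret finite_measure M by fact
  obtain B where "\<And>w. w \<in> W \<Longrightarrow> \<bar>\<phi> w\<bar> \<le> B"
    using continuous_on_compact_bound assms(3,4) by blast
  moreover have "space M = W"
    using sets_eq_imp_space_eq[OF M_sets] by (simp add: space_restrict_space)
  moreover have "\<phi> \<in> borel_measurable M"
    using borel_measurable_continuous_on_restrict[OF \<phi>_cont] measurable_cong_sets[OF M_sets refl]
    by blast
  ultimately show ?thesis
    by (intro integrable_const_bound[where B = B] AE_I2) auto
qed

lemma time_average_cmult: "time_average g x T (\<lambda>w. c * \<phi> w) = c * time_average g x T \<phi>"
  by (simp add: time_average_def)

lemma time_average_add:
  assumes "set_integrable lborel {0..T} (\<lambda>t. \<phi> (g (x t)))"
    and "set_integrable lborel {0..T} (\<lambda>t. \<psi> (g (x t)))"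
  shows "time_average g x T (\<lambda>w. \<phi> w + \<psi> w) = time_average g x T \<phi> + time_average g x T \<psi>"
  using assms by (simp add: time_average_def distrib_left)

lemma time_average_dist_le:
  assumes "T > 0"
    and \<phi>_int: "set_integrable lborel {0..T} (\<lambda>t. \<phi> (g (x t)))"
    and \<psi>_int: "set_integrable lborel {0..T} (\<lambda>t. \<psi> (g (x t)))"
    and close: "\<And>t. t \<in> {0..T} \<Longrightarrow> \<bar>\<phi> (g (x t)) - \<psi> (g (x t))\<bar> \<le> e"
  shows "\<bar>time_average g x T \<phi> - time_average g x T \<psi>\<bar> \<le> e"
proof -
  let ?d = "\<lambda>t. \<phi> (g (x t)) - \<psi> (g (x t))"
  have d_int: "set_integrable lborel {0..T} ?d"
    using \<phi>_int \<psi>_int by auto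
  have "\<bar>LINT t:{0..T}|lborel. ?d t\<bar> \<le> (LINT t:{0..T}|lborel. \<bar>?d t\<bar>)"
    using set_integral_norm_bound[OF d_int] by simp
  also have "\<dots> \<le> (LINT t:{0..T}|lborel. e)"
    using d_int close borel_integrable_atLeastAtMost'[OF continuous_on_const]
    by (intro set_integral_mono) (auto simp: set_integrable_abs)
  also have "\<dots> = T * e"
    using \<open>T > 0\<close> by (simp add: set_integral_const)
  finally have "\<bar>LINT t:{0..T}|lborel. ?d t\<bar> \<le> T * e" .
  moreover have "time_average g x T \<phi> - time_average g x T \<psi> = (LINT t:{0..T}|lborel. ?d t) / T"
    using \<phi>_int \<psi>_int by (simp add: time_average_def diff_divide_distrib)
  ultimately show ?thesis
    using \<open>T > 0\<close> by (simp add: divide_le_eq mult.commute)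
qed

lemma (in prob_space) integral_dist_le:
  fixes f g :: "'a \<Rightarrow> real"
  assumes "integrable M f" and "integrable M g" and close: "\<And>w. w \<in> space M \<Longrightarrow> \<bar>f w - g w\<bar> \<le> e"
  shows "\<bar>(\<integral>w. f w \<partial>M) - (\<integral>w. g w \<partial>M)\<bar> \<le> e"
proof -
  have "\<bar>(\<integral>w. f w \<partial>M) - (\<integral>w. g w \<partial>M)\<bar> \<le> (\<integral>w. \<bar>f w - g w\<bar> \<partial>M)"
    using assms(1,2) integral_abs_bound[of M "\<lambda>w. f w - g w"] by simp
  also have "\<dots> \<le> (\<integral>w. e \<partial>M)"
    using assms by (intro integral_mono) auto
  finally show ?thesis
    by (simp add: prob_space)
qed

lemma tendsto_time_average_of_uniform_approx:
  fixes \<phi> :: "'b::topological_space \<Rightarrow> real"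
  assumes traj: "\<And>T. (\<lambda>t. g (x t)) \<in> measurable (restrict_space lborel {0..T}) (restrict_space borel W)"
    and W: "compact W" and "prob_space \<mu>" and \<mu>_sets: "sets \<mu> = sets (restrict_space borel W)"
    and \<phi>_cont: "continuous_on W \<phi>"
    and approx: "\<And>e. e > 0 \<Longrightarrow> \<exists>f. continuous_on W f \<and>
        ((\<lambda>T. time_average g x T f) \<longlongrightarrow> (\<integral>w. f w \<partial>\<mu>)) at_top \<and> (\<forall>w\<in>W. \<bar>\<phi> w - f w\<bar> < e)"
  shows "((\<lambda>T. time_average g x T \<phi>) \<longlongrightarrow> (\<integral>w. \<phi> w \<partial>\<mu>)) at_top"
proof (rule tendstoI)
  interpret prob_space \<mu> by fact
  fix e :: real
  assume "e > 0"
  then obtain f where f_cont: "continuous_on W f"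
    and f_lim: "((\<lambda>T. time_average g x T f) \<longlongrightarrow> (\<integral>w. f w \<partial>\<mu>)) at_top"
    and close: "\<forall>w\<in>W. \<bar>\<phi> w - f w\<bar> < e / 3"
    using approx[of "e / 3"] by auto
  have space_\<mu>: "space \<mu> = W"
    using sets_eq_imp_space_eq[OF \<mu>_sets] by (simp add: space_restrict_space)
  have int_T: "set_integrable lborel {0..T} (\<lambda>t. \<psi> (g (x t)))"
    if "continuous_on W \<psi>" for \<psi> :: "'b \<Rightarrow> real" and T
    by (rule set_integrable_trajectory[OF traj W that])
  have int_\<mu>: "integrable \<mu> \<psi>" if "continuous_on W \<psi>" for \<psi> :: "'b \<Rightarrow> real"
    by (rule integrable_continuous_on_compact[OF finite_measure \<mu>_sets W that])
  have in_W: "g (x t) \<in> W" if "t \<in> {0..T}" for t T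
    using measurable_space[OF traj[of T]] that by (simp add: space_restrict_space)
  have limit_close: "\<bar>(\<integral>w. \<phi> w \<partial>\<mu>) - (\<integral>w. f w \<partial>\<mu>)\<bar> \<le> e / 3"
    using close space_\<mu> by (intro integral_dist_le int_\<mu> \<phi>_cont f_cont) (auto intro: less_imp_le)
  have third_pos: "e / 3 > 0"
    using \<open>e > 0\<close> by simp
  show "\<forall>\<^sub>F T in at_top. dist (time_average g x T \<phi>) (\<integral>w. \<phi> w \<partial>\<mu>) < e"
    using tendstoD[OF f_lim third_pos] eventually_gt_at_top[of 0]
  proof eventually_elim
    case (elim T)
    have "\<bar>time_average g x T \<phi> - time_average g x T f\<bar> \<le> e / 3"
      using close in_W \<open>T > 0\<close>
      by (intro time_average_dist_le int_T \<phi>_cont f_cont) (auto intro: less_imp_le)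
    then show ?case
      using elim limit_close unfolding dist_real_def by linarith
  qed
qed

subsection \<open>The algebra generated by the cosine modes\<close>

definition cos_mode :: "real^'v \<Rightarrow> ('v::finite \<Rightarrow> nat) \<Rightarrow> real^'v \<Rightarrow> real" where
  "cos_mode L k w = (\<Prod>i\<in>UNIV. cos (w$i * real (k i) * pi / L$i))"

lemma fourier_basis_eq_cos_mode: "fourier_basis h L k = (\<lambda>w. (1 / h k) * cos_mode L k w)"
  by (simp add: fun_eq_iff fourier_basis_def cos_mode_def)

inductive_set cos_polys :: "real^'v \<Rightarrow> (real^'v \<Rightarrow> real) set" for L :: "real^'v::finite" where
  mode: "cos_mode L k \<in> cos_polys L"
| add: "f \<in> cos_polys L \<Longrightarrow> g \<in> cos_polys L \<Longrightarrow> (\<lambda>w. f w + g w) \<in> cos_polys L"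
| cmult: "f \<in> cos_polys L \<Longrightarrow> (\<lambda>w. c * f w) \<in> cos_polys L"

lemma const_in_cos_polys: "(\<lambda>_. c) \<in> cos_polys L"
proof -
  have "cos_mode L (\<lambda>_. 0) = (\<lambda>_. 1)"
    by (simp add: cos_mode_def fun_eq_iff)
  then show ?thesis
    using cos_polys.cmult[OF cos_polys.mode[of L "\<lambda>_. 0"], of c] by simp
qed

lemma sum_in_cos_polys:
  "finite K \<Longrightarrow> (\<And>k. k \<in> K \<Longrightarrow> f k \<in> cos_polys L) \<Longrightarrow> (\<lambda>w. \<Sum>k\<in>K. f k w) \<in> cos_polys L"
proof (induction K rule: finite_induct)
  case empty
  then show ?case using const_in_cos_polys[of 0 L] by simp
next
  case (insert a F)
  then show ?case by (simp add: cos_polys.add)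
qed

lemma cos_times_cos_nat:
  "cos (real m * t) * cos (real n * t) = (cos (real (m + n) * t) + cos (real (max m n - min m n) * t)) / 2"
proof (cases "m \<le> n")
  case True
  then have "cos (real m * t - real n * t) = cos (real (max m n - min m n) * t)"
    by (metis cos_minus left_diff_distrib max_absorb2 min_absorb1 minus_diff_eq of_nat_diff)
  then show ?thesis by (simp add: cos_times_cos distrib_right add.commute)
next
  case False
  then show ?thesis by (simp add: cos_times_cos distrib_right add.commute left_diff_distrib of_nat_diff)
qed

lemma cos_mode_mult:
  fixes L :: "real^'v::finite"
  shows "cos_mode L a w * cos_mode L b w = (1 / 2) ^ CARD('v) *
    (\<Sum>J\<in>Pow UNIV. cos_mode L (\<lambda>i. if i \<in> J then a i + b i else max (a i) (b i) - min (a i) (b i)) w)"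
proof -
  define t where "t i = w$i * pi / L$i" for i
  define p where "p i = cos (real (a i + b i) * t i)" for i
  define q where "q i = cos (real (max (a i) (b i) - min (a i) (b i)) * t i)" for i
  have mode: "cos_mode L k w = (\<Prod>i\<in>UNIV. cos (real (k i) * t i))" for k
    by (simp add: cos_mode_def t_def mult_ac)
  have "cos_mode L a w * cos_mode L b w = (\<Prod>i\<in>UNIV. (p i + q i) / 2)"
    by (simp add: mode p_def q_def prod.distrib[symmetric] cos_times_cos_nat)
  also have "\<dots> = (1 / 2) ^ CARD('v) * (\<Prod>i\<in>UNIV. p i + q i)"
    by (simp add: prod_dividef power_one_over)
  also have "(\<Prod>i\<in>UNIV. p i + q i) = (\<Sum>J\<in>Pow UNIV. (\<Prod>i\<in>J. p i) * (\<Prod>i\<in>UNIV - J. q i))"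
    by (rule prod_add) simp
  also have "\<dots> = (\<Sum>J\<in>Pow UNIV. \<Prod>i\<in>UNIV. if i \<in> J then p i else q i)"
    by (intro sum.cong refl) (simp add: prod.If_cases Compl_eq_Diff_UNIV)
  also have "\<dots> = (\<Sum>J\<in>Pow UNIV.
      cos_mode L (\<lambda>i. if i \<in> J then a i + b i else max (a i) (b i) - min (a i) (b i)) w)"
    unfolding mode by (intro sum.cong prod.cong refl) (simp add: p_def q_def)
  finally show ?thesis .
qed

lemma cos_mode_mult_in_cos_polys: "f \<in> cos_polys L \<Longrightarrow> (\<lambda>w. cos_mode L a w * f w) \<in> cos_polys L"
proof (induction f rule: cos_polys.induct)
  case (mode b)
  have "(\<lambda>w. \<Sum>J\<in>Pow UNIV.
      cos_mode L (\<lambda>i. if i \<in> J then a i + b i else max (a i) (b i) - min (a i) (b i)) w) \<in> cos_polys L"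
    by (intro sum_in_cos_polys cos_polys.mode) simp
  then show ?case
    using cos_polys.cmult by (simp add: cos_mode_mult)
next
  case (add f g)
  then show ?case using cos_polys.add[OF add.IH] by (simp add: distrib_left)
next
  case (cmult f c)
  then show ?case using cos_polys.cmult[OF cmult.IH, of c] by (simp add: mult.left_commute)
qed

lemma mult_in_cos_polys: "f \<in> cos_polys L \<Longrightarrow> g \<in> cos_polys L \<Longrightarrow> (\<lambda>w. f w * g w) \<in> cos_polys L"
proof (induction f rule: cos_polys.induct)
  case (mode k)
  then show ?case by (rule cos_mode_mult_in_cos_polys)
next
  case (add f h)
  then show ?case using cos_polys.add[OF add.IH] by (simp add: distrib_right)
next
  case (cmult f c)
  then show ?case using cos_polys.cmult[OF cmult.IH, of c] by (simp add: mult.assoc)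
qed

text \<open>No hypothesis on \<open>L\<close> is needed: if \<open>L$i = 0\<close>, division by zero yields \<open>0\<close> and the
  \<open>i\<close>-th factor is the constant \<open>1\<close>.\<close>

lemma continuous_on_cos_polys: "f \<in> cos_polys L \<Longrightarrow> continuous_on S f"
proof (induction f rule: cos_polys.induct)
  case (mode k)
  have "continuous_on S (\<lambda>w. w$i * real (k i) * pi / L$i)" for i
    unfolding mult.assoc times_divide_eq_right[symmetric] by (intro continuous_intros)
  then show ?case
    unfolding cos_mode_def by (intro continuous_on_prod continuous_on_cos)
qed (auto intro: continuous_intros)

lemma cos_polys_separate_points:
  assumes L_pos: "\<And>i. L$i > 0" and "u \<in> workspace L" and "w \<in> workspace L" and "u \<noteq> w"
  shows "\<exists>f\<in>cos_polys L. f u \<noteq> f w"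
proof -
  obtain i where i: "u$i \<noteq> w$i"
    using \<open>u \<noteq> w\<close> by (auto simp: vec_eq_iff)
  define k where "k j = (if j = i then 1 else 0 :: nat)" for j
  have mode_k: "cos_mode L k z = cos (z$i * pi / L$i)" for z
  proof -
    have "cos_mode L k z = (\<Prod>j\<in>UNIV. if j = i then cos (z$i * pi / L$i) else 1)"
      unfolding cos_mode_def k_def by (intro prod.cong refl) auto
    then show ?thesis by simp
  qed
  have range: "0 \<le> z$i * pi / L$i \<and> z$i * pi / L$i \<le> pi" if "z \<in> workspace L" for z
    using that L_pos[of i] by (auto simp: workspace_def divide_le_eq)
  have "u$i * pi / L$i \<noteq> w$i * pi / L$i"
    using i L_pos[of i] by (simp add: divide_cancel_right)
  then have "cos_mode L k u \<noteq> cos_mode L k w"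
    unfolding mode_k using range[OF assms(2)] range[OF assms(3)] cos_inj_pi by blast
  then show ?thesis
    using cos_polys.mode by blast
qed

lemma cos_polys_dense:
  assumes "\<And>i. L$i > 0" and "continuous_on (workspace L) \<phi>" and "e > 0"
  shows "\<exists>f\<in>cos_polys L. \<forall>w\<in>workspace L. \<bar>\<phi> w - f w\<bar> < e"
proof -
  have "\<exists>f. f \<in> cos_polys L \<and> (\<forall>w\<in>workspace L. \<bar>\<phi> w - f w\<bar> < e)"
  proof (rule Stone_Weierstrass_HOL[where P = "\<lambda>f. f \<in> cos_polys L"])
    show "(\<lambda>w. f w + g w) \<in> cos_polys L" if "f \<in> cos_polys L \<and> g \<in> cos_polys L" for f g
      using that by (blast intro: cos_polys.add)
    show "(\<lambda>w. f w * g w) \<in> cos_polys L" if "f \<in> cos_polys L \<and> g \<in> cos_polys L" for f g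
      using that by (blast intro: mult_in_cos_polys)
    show "\<exists>f. f \<in> cos_polys L \<and> f u \<noteq> f w"
      if "u \<in> workspace L \<and> w \<in> workspace L \<and> u \<noteq> w" for u w
      using cos_polys_separate_points[OF assms(1)] that by blast
  qed (use assms compact_workspace const_in_cos_polys continuous_on_cos_polys in auto)
  then show ?thesis by blast
qed

lemma tendsto_time_average_cos_polys:
  assumes traj: "\<And>T. (\<lambda>t. g (x t)) \<in> measurable (restrict_space lborel {0..T}) (restrict_space borel W)"
    and W: "compact W" and \<mu>_fin: "finite_measure \<mu>" and \<mu>_sets: "sets \<mu> = sets (restrict_space borel W)"
    and modes: "\<And>k. ((\<lambda>T. time_average g x T (cos_mode L k)) \<longlongrightarrow> (\<integral>w. cos_mode L k w \<partial>\<mu>)) at_top"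
    and "f \<in> cos_polys L"
  shows "((\<lambda>T. time_average g x T f) \<longlongrightarrow> (\<integral>w. f w \<partial>\<mu>)) at_top"
  using \<open>f \<in> cos_polys L\<close>
proof (induction f rule: cos_polys.induct)
  case (mode k)
  then show ?case by (rule modes)
next
  case (add f\<^sub>1 f\<^sub>2)
  have cont: "continuous_on W f\<^sub>1" "continuous_on W f\<^sub>2"
    using add.hyps continuous_on_cos_polys by blast+
  have "time_average g x T (\<lambda>w. f\<^sub>1 w + f\<^sub>2 w) = time_average g x T f\<^sub>1 + time_average g x T f\<^sub>2" for T
    using cont by (intro time_average_add set_integrable_trajectory[OF traj W])
  moreover have "(\<integral>w. f\<^sub>1 w + f\<^sub>2 w \<partial>\<mu>) = (\<integral>w. f\<^sub>1 w \<partial>\<mu>) + (\<integral>w. f\<^sub>2 w \<partial>\<mu>)"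
    using cont by (intro Bochner_Integration.integral_add integrable_continuous_on_compact[OF \<mu>_fin \<mu>_sets W])
  ultimately show ?case
    using tendsto_add[OF add.IH] by simp
next
  case (cmult f c)
  then show ?case
    using tendsto_mult_left[OF cmult.IH, of c] by (simp add: time_average_cmult)
qed

lemma le_infsum_ennreal:
  fixes f :: "'a \<Rightarrow> ennreal"
  assumes "k \<in> A"
  shows "f k \<le> (\<Sum>\<^sub>\<infinity>j\<in>A. f j)"
proof -
  have summable: "f summable_on B" for B
    by (rule nonneg_summable_on_complete) auto
  have "(\<Sum>\<^sub>\<infinity>j\<in>{k}. f j) \<le> (\<Sum>\<^sub>\<infinity>j\<in>A. f j)"
    using assms by (intro infsum_mono_neutral summable) auto
  then show ?thesis by simp
qed

lemma tendsto_zero_of_weighted_sum_sq: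
  fixes d :: "'k \<Rightarrow> 'a \<Rightarrow> real"
  assumes sum_lim: "((\<lambda>T. \<Sum>\<^sub>\<infinity>j\<in>UNIV. ennreal (c j * (d j T)\<^sup>2)) \<longlongrightarrow> 0) F" and "c k > 0"
  shows "((\<lambda>T. d k T) \<longlongrightarrow> 0) F"
proof -
  have "((\<lambda>T. ennreal (c k * (d k T)\<^sup>2)) \<longlongrightarrow> 0) F"
    by (rule tendsto_sandwich[OF _ _ tendsto_const sum_lim]) (auto intro!: always_eventually le_infsum_ennreal)
  then have "((\<lambda>T. c k * (d k T)\<^sup>2) \<longlongrightarrow> 0) F"
    using \<open>c k > 0\<close> by (intro tendsto_ennrealD) auto
  then have "((\<lambda>T. (1 / c k) * (c k * (d k T)\<^sup>2)) \<longlongrightarrow> 0) F"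
    by (rule tendsto_mult_right_zero)
  then have "((\<lambda>T. sqrt ((d k T)\<^sup>2)) \<longlongrightarrow> 0) F"
    using \<open>c k > 0\<close> tendsto_real_sqrt by fastforce
  then show ?thesis
    by (simp add: tendsto_rabs_zero_iff)
qed

lemma spectral_weight_pos: "spectral_weight k > 0"
proof -
  have "1 + sqrt (\<Sum>i\<in>UNIV. (real (k i))\<^sup>2) > 0"
    by (simp add: sum_nonneg add_pos_nonneg)
  then show ?thesis
    unfolding spectral_weight_def by simp
qed

lemma tendsto_time_average_cos_mode:
  assumes cost: "((\<lambda>T. spectral_ergodic_cost h L \<mu> g x T) \<longlongrightarrow> 0) at_top" and "h k > 0"
  shows "((\<lambda>T. time_average g x T (cos_mode L k)) \<longlongrightarrow> (\<integral>w. cos_mode L k w \<partial>\<mu>)) at_top"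
proof -
  let ?err = "\<lambda>k T. time_average g x T (fourier_basis h L k) - (\<integral>w. fourier_basis h L k w \<partial>\<mu>)"
  have "((\<lambda>T. ?err k T) \<longlongrightarrow> 0) at_top"
    using cost spectral_weight_pos unfolding spectral_ergodic_cost_def
    by (rule tendsto_zero_of_weighted_sum_sq)
  then have "((\<lambda>T. h k * ?err k T) \<longlongrightarrow> 0) at_top"
    by (rule tendsto_mult_right_zero)
  moreover have "h k * ?err k T = time_average g x T (cos_mode L k) - (\<integral>w. cos_mode L k w \<partial>\<mu>)" for T
    unfolding fourier_basis_eq_cos_mode time_average_cmult integral_mult_right_zero
    using \<open>h k > 0\<close> by (simp add: right_diff_distrib)
  ultimately show ?thesis
    by (simp add: LIM_zero_iff)
qed

theorem theorem2:
  fixes X :: "(real^'n) set"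
    and L :: "real^'v"
    and g :: "real^'n \<Rightarrow> real^'v"
    and \<mu> :: "(real^'v) measure"
    and h :: "('v \<Rightarrow> nat) \<Rightarrow> real"
  assumes L_pos: "\<And>i. L$i > 0"
    and g_maps: "g ` X \<subseteq> workspace L"
    and g_meas: "g \<in> borel_measurable (restrict_space borel X)"
    and mu_prob: "prob_space \<mu>"
    and mu_sets: "sets \<mu> = sets (restrict_space borel (workspace L))"
    and h_pos: "\<And>k. h k > 0"
  shows "ergodic_cost_function X g \<mu> (spectral_ergodic_cost h L \<mu> g)"
  unfolding ergodic_cost_function_def ergodic_wrt_def
proof (intro allI impI)
  fix x :: "real \<Rightarrow> real^'n" and \<phi> :: "real^'v \<Rightarrow> real"
  assume x_cont: "continuous_on {0..} x" and x_in: "x ` {0..} \<subseteq> X"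
    and cost: "((\<lambda>T. spectral_ergodic_cost h L \<mu> g x T) \<longlongrightarrow> 0) at_top"
    and \<phi>_cont: "continuous_on (space \<mu>) \<phi>"
  have space_\<mu>: "space \<mu> = workspace L"
    using sets_eq_imp_space_eq[OF mu_sets] by (simp add: space_restrict_space)
  have traj: "(\<lambda>t. g (x t)) \<in> measurable (restrict_space lborel {0..T}) (restrict_space borel (workspace L))"
    for T
    by (rule measurable_trajectory[OF x_cont x_in g_maps g_meas])
  have polys_lim: "((\<lambda>T. time_average g x T f) \<longlongrightarrow> (\<integral>w. f w \<partial>\<mu>)) at_top"
    if "f \<in> cos_polys L" for f
    by (rule tendsto_time_average_cos_polys[where g = g and x = x, OF traj compact_workspace[of L]
          prob_space.finite_measure[OF mu_prob] mu_sets tendsto_time_average_cos_mode[OF cost h_pos] that])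
  show "((\<lambda>T. time_average g x T \<phi>) \<longlongrightarrow> (\<integral>w. \<phi> w \<partial>\<mu>)) at_top"
  proof (rule tendsto_time_average_of_uniform_approx[where g = g and x = x,
        OF traj compact_workspace[of L] mu_prob mu_sets])
    show "continuous_on (workspace L) \<phi>"
      using \<phi>_cont space_\<mu> by simp
    then show "\<exists>f. continuous_on (workspace L) f \<and>
        ((\<lambda>T. time_average g x T f) \<longlongrightarrow> (\<integral>w. f w \<partial>\<mu>)) at_top \<and>
        (\<forall>w\<in>workspace L. \<bar>\<phi> w - f w\<bar> < e)" if "e > 0" for e
      using cos_polys_dense[OF L_pos _ that] continuous_on_cos_polys polys_lim by blast
  qed
qed

end
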